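(* rATL is strictly more expressive than rCTL, in the following sense: (i) for every rCTL formula $\varphi$ there is an rATL formula $\varphi^\star$ such that $V(s,\varphi^\star)=V_{rCTL}(s,\varphi)$ for every Kripke structure $\mathcal{K}$ and every state $s$ of $\mathcal{K}$ (with $\varphi^\star$ evaluated in $\mathcal{S}_\mathcal{K}$); and (ii) there exists an rATL formula $\psi$ such that for no rCTL formula $\chi$ it holds that $V(s,\psi)=V_{rCTL}(s,\chi)$ for every concurrent game structure $\mathcal{S}$ and every state $s$ of $\mathcal{S}$, where $V_{rCTL}$ on a concurrent game structure is evaluated in its underlying Kripke structure.
   Context: Fix a finite set $\mathrm{AP}$ of atomic propositions. A concurrent game structure (CGS) is a tuple $\mathcal{S}=(St,Ag,Ac,\delta,\ell)$ where $St$ is a finite set of states, $Ag$ a finite set of agents, $Ac$ a finite set of actions, $\ell:St\to 2^{\mathrm{AP}}$ a labeling, and $\delta:St\times AV\to St$ a transition function, where $AV$ is the set of action vectors for $Ag$ (an action vector for $A\subseteq Ag$ is a map $A\to Ac$). A state $s'$ is a successor of $s$ if $s'=\delta(s,v)$ for some $v\in AV$. A path is an infinite sequence $\pi=s_0s_1s_2\cdots$ of states with $s_{n+1}$ a successor of $s_n$ for all $n$; write $\pi[n]=s_n$. A strategy for an agent is a function $f:St^+\to Ac$. For $A\subseteq Ag$ and a set $F_A=\{f_a\mid a\in A\}$ of strategies, one for each agent in $A$, $out(s,F_A)$ is the set of paths $s_0s_1\cdots$ with $s_0=s$ such that for every $n\ge 0$ there is $v\in AV$ with $v(a)=f_a(s_0\cdots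 s_n)$ for all $a\in A$ and $s_{n+1}=\delta(s_n,v)$. $\mathbb{B}_4=\{1111,0111,0011,0001,0000\}$ is totally ordered by $1111\succ0111\succ0011\succ0001\succ0000$; for $b=b_1b_2b_3b_4\in\mathbb{B}_4$ and $k\in\{1,2,3,4\}$, $b[k]=b_k$; max and min on $\mathbb{B}_4$ refer to this order, and on bits to $0<1$. rATL formulas: state formulas $\varphi ::= p \mid \neg\varphi\mid\varphi\vee\varphi\mid\varphi\wedge\varphi\mid\varphi\to\varphi\mid\langle\!\langle A\rangle\!\rangle\Phi\mid[\![A]\!]\Phi$ and path formulas $\Phi::=\dot{\bigcirc}\varphi\mid\dot\Diamond\varphi\mid\dot\Box\varphi$, with $p\in\mathrm{AP}$ and $A$ a set of agents; an rATL formula is a state formula. On a CGS the valuation $V$ maps (state, state formula) and (path, path formula) pairs to $\mathbb{B}_4$: $V(s,p)=1111$ if $p\in\ell(s)$ and $0000$ otherwise; $V(s,\varphi_1\vee\varphi_2)=\max(V(s,\varphi_1),V(s,\varphi_2))$; $V(s,\varphi_1\wedge\varphi_2)=\min(V(s,\varphi_1),V(s,\varphi_2))$; $V(s,\neg\varphi)=0000$ if $V(s,\varphi)=1111$ and $1111$ otherwise; $V(s,\varphi_1\to\varphi_2)=1111$ if $V(s,\varphi_1)\preceq V(s,\varphi_2)$ and $V(s,\varphi_2)$ otherwise; $V(s,\langle\!\langle A\rangle\!\rangle\Phi)$ is the maximal $b\in\mathbb{B}_4$ such that there is a set $F_A$ of strategies (one per agent in $A$) with $V(\pi,\Phi)\succeq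 b$ for all $\pi\in out(s,F_A)$; $V(s,[\![A]\!]\Phi)$ is the maximal $b\in\mathbb{B}_4$ such that for every such $F_A$ there is $\pi\in out(s,F_A)$ with $V(\pi,\Phi)\succeq b$. For paths: $V(\pi,\dot\bigcirc\varphi)[k]=V(\pi[1],\varphi)[k]$; $V(\pi,\dot\Diamond\varphi)[k]=\max_{i\ge0}V(\pi[i],\varphi)[k]$; $V(\pi,\dot\Box\varphi)=b_1b_2b_3b_4$ with $b_1=\min_{i\ge0}V(\pi[i],\varphi)[1]$, $b_2=\max_{i\ge0}\min_{j\ge i}V(\pi[j],\varphi)[2]$, $b_3=\min_{i\ge0}\max_{j\ge i}V(\pi[j],\varphi)[3]$, $b_4=\max_{i\ge0}V(\pi[i],\varphi)[4]$. A Kripke structure is $\mathcal{K}=(S,I,R,L)$ with finite state set $S$, initial states $I\subseteq S$, transition relation $R\subseteq S\times S$ such that every state has an $R$-successor, and labeling $L:S\to2^{\mathrm{AP}}$; a path is an infinite sequence $s_0s_1\cdots$ with $(s_i,s_{i+1})\in R$; $\mathit{paths}(s)$ is the set of paths starting in $s$. rCTL formulas: state formulas $\varphi::=p\mid\neg\varphi\mid\varphi\vee\varphi\mid\varphi\wedge\varphi\mid\varphi\to\varphi\mid\exists\Phi\mid\forall\Phi$, path formulas $\Phi::=\dot\bigcirc\varphi\mid\dot\Diamond\varphi\mid\dot\Box\varphi$. The valuation $V_{rCTL}$ is defined exactly as $V$ above for atomic propositions, Boolean connectives and $\dot\bigcirc,\dot\Diamond,\dot\Box$ (with $L$ in place of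 $\ell$), and $V_{rCTL}(s,\exists\Phi)=\max_{\pi\in\mathit{paths}(s)}V_{rCTL}(\pi,\Phi)$, $V_{rCTL}(s,\forall\Phi)=\min_{\pi\in\mathit{paths}(s)}V_{rCTL}(\pi,\Phi)$. The underlying Kripke structure of a CGS $\mathcal{S}$ has the same states and labeling, with $R=\{(s,s')\mid s'\text{ is a successor of }s\}$. The CGS associated with $\mathcal{K}$ is $\mathcal{S}_\mathcal{K}=(S,\{a\},S,\delta,L)$ with a single agent $a$, actions $S$, and $\delta(s,s')=s'$ if $(s,s')\in R$, and $\delta(s,s')=s''$ for some fixed $s''$ with $(s,s'')\in R$ otherwise (action vectors for $\{a\}$ are identified with actions). *)

theory Defs
  imports Main "HOL-Library.FuncSet"
begin

text \<open>An element of B4 is represented by its number of 1-bits: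
  0000 = 0, 0001 = 1, 0011 = 2, 0111 = 3, 1111 = 4.  The total order on B4
  is then the order on nat restricted to 0..4.\<close>

definition b4_top :: nat where "b4_top = 4"
definition b4_bot :: nat where "b4_bot = 0"

text \<open>b[k] for k in 1..4\<close>
definition b4_bit :: "nat \<Rightarrow> nat \<Rightarrow> bool" where
  "b4_bit b k \<longleftrightarrow> 5 \<le> k + b"

text \<open>the element b1 b2 b3 b4 (for bit strings that lie in B4)\<close>
definition b4_of_bits :: "bool \<Rightarrow> bool \<Rightarrow> bool \<Rightarrow> bool \<Rightarrow> nat" where
  "b4_of_bits b1 b2 b3 b4 = of_bool b1 + of_bool b2 + of_bool b3 + of_bool b4"

definition b4_neg :: "nat \<Rightarrow> nat" where
  "b4_neg b = (if b = b4_top then b4_bot else b4_top)"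

definition b4_imp :: "nat \<Rightarrow> nat \<Rightarrow> nat" where
  "b4_imp b1 b2 = (if b1 \<le> b2 then b4_top else b2)"

record 'ap cgs =
  St :: "nat set"
  Ag :: "nat set"
  Ac :: "nat set"
  delta :: "nat \<Rightarrow> (nat \<Rightarrow> nat) \<Rightarrow> nat"
  lab :: "nat \<Rightarrow> 'ap set"

definition AV :: "'ap cgs \<Rightarrow> (nat \<Rightarrow> nat) set" where
  "AV S = (Ag S \<rightarrow>\<^sub>E Ac S)"

definition cgs_wf :: "'ap cgs \<Rightarrow> bool" where
  "cgs_wf S \<longleftrightarrow> finite (St S) \<and> St S \<noteq> {} \<and> finite (Ag S) \<and> finite (Ac S) \<and> Ac S \<noteq> {}
     \<and> (\<forall>s\<in>St S. \<forall>v\<in>AV S. delta S s v \<in> St S)"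

definition successor :: "'ap cgs \<Rightarrow> nat \<Rightarrow> nat \<Rightarrow> bool" where
  "successor S s s' \<longleftrightarrow> (\<exists>v\<in>AV S. s' = delta S s v)"

definition hist :: "(nat \<Rightarrow> nat) \<Rightarrow> nat \<Rightarrow> nat list" where
  "hist \<pi> n = map \<pi> [0..<Suc n]"

text \<open>F a is the strategy of agent a (for the agents a of A); a strategy maps
  nonempty state sequences to actions\<close>
definition is_strats :: "'ap cgs \<Rightarrow> nat set \<Rightarrow> (nat \<Rightarrow> nat list \<Rightarrow> nat) \<Rightarrow> bool" where
  "is_strats S A F \<longleftrightarrow> (\<forall>a\<in>A \<inter> Ag S. \<forall>h. F a h \<in> Ac S)"

definition out :: "'ap cgs \<Rightarrow> nat \<Rightarrow> nat set \<Rightarrow> (nat \<Rightarrow> nat list \<Rightarrow> nat) \<Rightarrow> (nat \<Rightarrow> nat) set" where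
  "out S s A F = {\<pi>. \<pi> 0 = s \<and> (\<forall>n. \<exists>v\<in>AV S. (\<forall>a\<in>A \<inter> Ag S. v a = F a (hist \<pi> n))
                                          \<and> \<pi> (Suc n) = delta S (\<pi> n) v)}"

datatype 'ap ratl =
    Prop 'ap
  | Neg "'ap ratl"
  | Or "'ap ratl" "'ap ratl"
  | And "'ap ratl" "'ap ratl"
  | Imp "'ap ratl" "'ap ratl"
  | Diam "nat set" "'ap ratl_path"
  | Box "nat set" "'ap ratl_path"
and 'ap ratl_path =
    Next "'ap ratl"
  | Ev "'ap ratl"
  | Alw "'ap ratl"

primrec Vs :: "'ap ratl \<Rightarrow> 'ap cgs \<Rightarrow> nat \<Rightarrow> nat"
  and Vp :: "'ap ratl_path \<Rightarrow> 'ap cgs \<Rightarrow> (nat \<Rightarrow> nat) \<Rightarrow> nat" where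
  "Vs (Prop p) S s = (if p \<in> lab S s then b4_top else b4_bot)"
| "Vs (Neg \<phi>) S s = b4_neg (Vs \<phi> S s)"
| "Vs (Or \<phi> \<psi>) S s = max (Vs \<phi> S s) (Vs \<psi> S s)"
| "Vs (And \<phi> \<psi>) S s = min (Vs \<phi> S s) (Vs \<psi> S s)"
| "Vs (Imp \<phi> \<psi>) S s = b4_imp (Vs \<phi> S s) (Vs \<psi> S s)"
| "Vs (Diam A \<Phi>) S s = Max {b. b \<le> b4_top \<and>
      (\<exists>F. is_strats S A F \<and> (\<forall>\<pi>\<in>out S s A F. b \<le> Vp \<Phi> S \<pi>))}"
| "Vs (Box A \<Phi>) S s = Max {b. b \<le> b4_top \<and>
      (\<forall>F. is_strats S A F \<longrightarrow> (\<exists>\<pi>\<in>out S s A F. b \<le> Vp \<Phi> S \<pi>))}"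
| "Vp (Next \<phi>) S \<pi> = Vs \<phi> S (\<pi> 1)"
| "Vp (Ev \<phi>) S \<pi> = b4_of_bits
      (\<exists>i. b4_bit (Vs \<phi> S (\<pi> i)) 1) (\<exists>i. b4_bit (Vs \<phi> S (\<pi> i)) 2)
      (\<exists>i. b4_bit (Vs \<phi> S (\<pi> i)) 3) (\<exists>i. b4_bit (Vs \<phi> S (\<pi> i)) 4)"
| "Vp (Alw \<phi>) S \<pi> = b4_of_bits
      (\<forall>i. b4_bit (Vs \<phi> S (\<pi> i)) 1)
      (\<exists>i. \<forall>j\<ge>i. b4_bit (Vs \<phi> S (\<pi> j)) 2)
      (\<forall>i. \<exists>j\<ge>i. b4_bit (Vs \<phi> S (\<pi> j)) 3)
      (\<exists>i. b4_bit (Vs \<phi> S (\<pi> i)) 4)"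

record 'ap kripke =
  KS :: "nat set"
  KI :: "nat set"
  KR :: "(nat \<times> nat) set"
  KL :: "nat \<Rightarrow> 'ap set"

definition kripke_wf :: "'ap kripke \<Rightarrow> bool" where
  "kripke_wf K \<longleftrightarrow> finite (KS K) \<and> KI K \<subseteq> KS K \<and> KR K \<subseteq> KS K \<times> KS K
     \<and> (\<forall>s\<in>KS K. \<exists>s'. (s, s') \<in> KR K)"

definition kpaths :: "'ap kripke \<Rightarrow> nat \<Rightarrow> (nat \<Rightarrow> nat) set" where
  "kpaths K s = {\<pi>. \<pi> 0 = s \<and> (\<forall>n. (\<pi> n, \<pi> (Suc n)) \<in> KR K)}"

datatype 'ap rctl =
    CProp 'ap
  | CNeg "'ap rctl"
  | COr "'ap rctl" "'ap rctl"
  | CAnd "'ap rctl" "'ap rctl"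
  | CImp "'ap rctl" "'ap rctl"
  | CEx "'ap rctl_path"
  | CAll "'ap rctl_path"
and 'ap rctl_path =
    CNext "'ap rctl"
  | CEv "'ap rctl"
  | CAlw "'ap rctl"

primrec Vcs :: "'ap rctl \<Rightarrow> 'ap kripke \<Rightarrow> nat \<Rightarrow> nat"
  and Vcp :: "'ap rctl_path \<Rightarrow> 'ap kripke \<Rightarrow> (nat \<Rightarrow> nat) \<Rightarrow> nat" where
  "Vcs (CProp p) K s = (if p \<in> KL K s then b4_top else b4_bot)"
| "Vcs (CNeg \<phi>) K s = b4_neg (Vcs \<phi> K s)"
| "Vcs (COr \<phi> \<psi>) K s = max (Vcs \<phi> K s) (Vcs \<psi> K s)"
| "Vcs (CAnd \<phi> \<psi>) K s = min (Vcs \<phi> K s) (Vcs \<psi> K s)"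
| "Vcs (CImp \<phi> \<psi>) K s = b4_imp (Vcs \<phi> K s) (Vcs \<psi> K s)"
| "Vcs (CEx \<Phi>) K s = Max ((\<lambda>\<pi>. Vcp \<Phi> K \<pi>) ` kpaths K s)"
| "Vcs (CAll \<Phi>) K s = Min ((\<lambda>\<pi>. Vcp \<Phi> K \<pi>) ` kpaths K s)"
| "Vcp (CNext \<phi>) K \<pi> = Vcs \<phi> K (\<pi> 1)"
| "Vcp (CEv \<phi>) K \<pi> = b4_of_bits
      (\<exists>i. b4_bit (Vcs \<phi> K (\<pi> i)) 1) (\<exists>i. b4_bit (Vcs \<phi> K (\<pi> i)) 2)
      (\<exists>i. b4_bit (Vcs \<phi> K (\<pi> i)) 3) (\<exists>i. b4_bit (Vcs \<phi> K (\<pi> i)) 4)"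
| "Vcp (CAlw \<phi>) K \<pi> = b4_of_bits
      (\<forall>i. b4_bit (Vcs \<phi> K (\<pi> i)) 1)
      (\<exists>i. \<forall>j\<ge>i. b4_bit (Vcs \<phi> K (\<pi> j)) 2)
      (\<forall>i. \<exists>j\<ge>i. b4_bit (Vcs \<phi> K (\<pi> j)) 3)
      (\<exists>i. b4_bit (Vcs \<phi> K (\<pi> i)) 4)"

definition cgs_of_kripke :: "'ap kripke \<Rightarrow> 'ap cgs" where
  "cgs_of_kripke K = \<lparr> St = KS K, Ag = {0}, Ac = KS K,
     delta = (\<lambda>s v. if (s, v 0) \<in> KR K then v 0 else (SOME s''. (s, s'') \<in> KR K)),
     lab = KL K \<rparr>"

definition kripke_of_cgs :: "'ap cgs \<Rightarrow> 'ap kripke" where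
  "kripke_of_cgs S = \<lparr> KS = St S, KI = St S,
     KR = {(s, s'). s \<in> St S \<and> successor S s s'}, KL = lab S \<rparr>"

end

theory Submission
  imports Defs
begin

text \<open>Over the CGS of a Kripke structure the empty coalition controls nothing, so its outcomes
  are exactly the Kripke paths: \<open>\<forall>\<close> becomes \<open>\<langle>\<langle>{}\<rangle>\<rangle>\<close> and \<open>\<exists>\<close> becomes \<open>[[{}]]\<close>.
  For strictness, two CGSs with the same underlying Kripke structure are separated by
  \<open>\<langle>\<langle>{0}\<rangle>\<rangle>\<circle>p\<close>: in one agent 0 picks the successor of the initial state alone, in the other
  it plays matching pennies against agent 1 and cannot enforce \<open>p\<close>.
  No rCTL formula sees the difference, as it only depends on the Kripke structure.\<close>

primrec ratl_of_rctl :: "'ap rctl \<Rightarrow> 'ap ratl"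
  and ratl_path_of_rctl_path :: "'ap rctl_path \<Rightarrow> 'ap ratl_path" where
  "ratl_of_rctl (CProp p) = Prop p"
| "ratl_of_rctl (CNeg \<phi>) = Neg (ratl_of_rctl \<phi>)"
| "ratl_of_rctl (COr \<phi> \<psi>) = Or (ratl_of_rctl \<phi>) (ratl_of_rctl \<psi>)"
| "ratl_of_rctl (CAnd \<phi> \<psi>) = And (ratl_of_rctl \<phi>) (ratl_of_rctl \<psi>)"
| "ratl_of_rctl (CImp \<phi> \<psi>) = Imp (ratl_of_rctl \<phi>) (ratl_of_rctl \<psi>)"
| "ratl_of_rctl (CEx \<Phi>) = Box {} (ratl_path_of_rctl_path \<Phi>)"
| "ratl_of_rctl (CAll \<Phi>) = Diam {} (ratl_path_of_rctl_path \<Phi>)"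
| "ratl_path_of_rctl_path (CNext \<phi>) = Next (ratl_of_rctl \<phi>)"
| "ratl_path_of_rctl_path (CEv \<phi>) = Ev (ratl_of_rctl \<phi>)"
| "ratl_path_of_rctl_path (CAlw \<phi>) = Alw (ratl_of_rctl \<phi>)"

lemma kripke_wf_successor_in_KS:
  "kripke_wf K \<Longrightarrow> (s, s') \<in> KR K \<Longrightarrow> s' \<in> KS K"
  unfolding kripke_wf_def by auto

lemma kripke_wf_ex_successor:
  "kripke_wf K \<Longrightarrow> s \<in> KS K \<Longrightarrow> \<exists>s'. (s, s') \<in> KR K"
  unfolding kripke_wf_def by auto

lemma successor_cgs_of_kripke:
  assumes wf: "kripke_wf K" and s: "s \<in> KS K"
  shows "successor (cgs_of_kripke K) s s' \<longleftrightarrow> (s, s') \<in> KR K"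
proof
  assume "successor (cgs_of_kripke K) s s'"
  then obtain v where "s' = (if (s, v 0) \<in> KR K then v 0 else (SOME s''. (s, s'') \<in> KR K))"
    unfolding successor_def cgs_of_kripke_def by auto
  then show "(s, s') \<in> KR K"
    using kripke_wf_ex_successor[OF wf s] by (auto intro: someI_ex)
next
  assume R: "(s, s') \<in> KR K"
  then have "(\<lambda>_\<in>{0::nat}. s') \<in> AV (cgs_of_kripke K)"
    using kripke_wf_successor_in_KS[OF wf] by (auto simp: AV_def cgs_of_kripke_def)
  with R show "successor (cgs_of_kripke K) s s'"
    unfolding successor_def by (auto simp: cgs_of_kripke_def intro!: bexI[of _ "\<lambda>_\<in>{0::nat}. s'"])
qed

lemma kpaths_in_KS: "kripke_wf K \<Longrightarrow> \<pi> \<in> kpaths K s \<Longrightarrow> \<pi> n \<in> KS K"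
  unfolding kripke_wf_def kpaths_def by blast

lemma kpaths_nonempty:
  assumes wf: "kripke_wf K" and s: "s \<in> KS K"
  shows "kpaths K s \<noteq> {}"
proof -
  define \<pi> where "\<pi> = rec_nat s (\<lambda>_ x. SOME y. (x, y) \<in> KR K)"
  have "\<pi> n \<in> KS K \<and> (\<pi> n, \<pi> (Suc n)) \<in> KR K" for n
  proof (induction n)
    case 0
    show ?case
      using s kripke_wf_ex_successor[OF wf s] by (auto simp: \<pi>_def intro: someI_ex)
  next
    case (Suc n)
    then have "\<pi> (Suc n) \<in> KS K" by (blast intro: kripke_wf_successor_in_KS[OF wf])
    then show ?case
      using kripke_wf_ex_successor[OF wf] by (auto simp: \<pi>_def intro: someI_ex)
  qed
  then have "\<pi> \<in> kpaths K s" by (simp add: kpaths_def \<pi>_def)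
  then show ?thesis by auto
qed

lemma out_empty_coalition_cgs_of_kripke:
  assumes wf: "kripke_wf K" and s: "s \<in> KS K"
  shows "out (cgs_of_kripke K) s {} F = kpaths K s"
proof (intro set_eqI iffI)
  fix \<pi> assume \<pi>: "\<pi> \<in> out (cgs_of_kripke K) s {} F"
  then have step: "\<And>n. successor (cgs_of_kripke K) (\<pi> n) (\<pi> (Suc n))" and "\<pi> 0 = s"
    unfolding out_def successor_def by auto
  moreover have "\<pi> n \<in> KS K" for n
  proof (induction n)
    case 0 show ?case using \<open>\<pi> 0 = s\<close> s by simp
  next
    case (Suc n) then show ?case
      using step successor_cgs_of_kripke[OF wf] kripke_wf_successor_in_KS[OF wf] by blast
  qed
  ultimately show "\<pi> \<in> kpaths K s"
    unfolding kpaths_def using successor_cgs_of_kripke[OF wf] by blast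
next
  fix \<pi> assume \<pi>: "\<pi> \<in> kpaths K s"
  then have "successor (cgs_of_kripke K) (\<pi> n) (\<pi> (Suc n))" for n
    using successor_cgs_of_kripke[OF wf kpaths_in_KS[OF wf \<pi>]] by (simp add: kpaths_def)
  with \<pi> show "\<pi> \<in> out (cgs_of_kripke K) s {} F"
    unfolding out_def successor_def kpaths_def by auto
qed

lemma b4_of_bits_le_top: "b4_of_bits b1 b2 b3 b4 \<le> b4_top"
  unfolding b4_of_bits_def b4_top_def by simp

lemma finite_image_le_b4_top: "\<forall>x\<in>P. f x \<le> b4_top \<Longrightarrow> finite (f ` P)"
  by (rule finite_subset[of _ "{..b4_top}"]) auto

lemma Max_b4_ex:
  fixes f :: "'a \<Rightarrow> nat"
  assumes "P \<noteq> {}" and "\<forall>x\<in>P. f x \<le> b4_top"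
  shows "Max {b. b \<le> b4_top \<and> (\<exists>x\<in>P. b \<le> f x)} = Max (f ` P)"
proof -
  have fin: "finite (f ` P)" and ne: "f ` P \<noteq> {}"
    using assms finite_image_le_b4_top by auto
  have "{b. b \<le> b4_top \<and> (\<exists>x\<in>P. b \<le> f x)} = {..Max (f ` P)}"
    using assms Max_ge_iff[OF fin ne] Max_le_iff[OF fin ne] le_trans by blast
  then show ?thesis by (auto intro!: Max_eqI)
qed

lemma Max_b4_all:
  fixes f :: "'a \<Rightarrow> nat"
  assumes "P \<noteq> {}" and "\<forall>x\<in>P. f x \<le> b4_top"
  shows "Max {b. b \<le> b4_top \<and> (\<forall>x\<in>P. b \<le> f x)} = Min (f ` P)"
proof -
  have fin: "finite (f ` P)" and ne: "f ` P \<noteq> {}"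
    using assms finite_image_le_b4_top by auto
  have "{b. b \<le> b4_top \<and> (\<forall>x\<in>P. b \<le> f x)} = {..Min (f ` P)}"
    using assms Min_ge_iff[OF fin ne] Min_le_iff[OF fin ne] le_trans by blast
  then show ?thesis by (auto intro!: Max_eqI)
qed

lemma Vcs_le_b4_top:
  assumes wf: "kripke_wf K"
  shows "s \<in> KS K \<Longrightarrow> Vcs \<phi> K s \<le> b4_top"
    and "(\<And>n. \<pi> n \<in> KS K) \<Longrightarrow> Vcp \<Phi> K \<pi> \<le> b4_top"
proof (induction \<phi> and \<Phi> arbitrary: s and \<pi>)
  case (CEx \<Phi>)
  have "\<forall>\<pi>\<in>kpaths K s. Vcp \<Phi> K \<pi> \<le> b4_top"
    using CEx kpaths_in_KS[OF wf] by blast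
  with kpaths_nonempty[OF wf CEx.prems] show ?case
    by (simp add: Max_le_iff finite_image_le_b4_top)
next
  case (CAll \<Phi>)
  have "\<forall>\<pi>\<in>kpaths K s. Vcp \<Phi> K \<pi> \<le> b4_top"
    using CAll kpaths_in_KS[OF wf] by blast
  with kpaths_nonempty[OF wf CAll.prems] show ?case
    by (auto simp: Min_le_iff finite_image_le_b4_top)
qed (auto simp: b4_top_def b4_bot_def b4_neg_def b4_imp_def b4_of_bits_le_top[unfolded b4_top_def] min.coboundedI1)

lemma Vs_ratl_of_rctl:
  assumes wf: "kripke_wf K"
  shows "s \<in> KS K \<Longrightarrow> Vs (ratl_of_rctl \<phi>) (cgs_of_kripke K) s = Vcs \<phi> K s"
    and "(\<And>n. \<pi> n \<in> KS K) \<Longrightarrow>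
           Vp (ratl_path_of_rctl_path \<Phi>) (cgs_of_kripke K) \<pi> = Vcp \<Phi> K \<pi>"
proof (induction \<phi> and \<Phi> arbitrary: s and \<pi>)
  case (CProp p)
  then show ?case by (simp add: cgs_of_kripke_def)
next
  case (CEx \<Phi>)
  have "\<forall>\<pi>\<in>kpaths K s. Vp (ratl_path_of_rctl_path \<Phi>) (cgs_of_kripke K) \<pi> = Vcp \<Phi> K \<pi>
      \<and> Vcp \<Phi> K \<pi> \<le> b4_top"
    using CEx kpaths_in_KS[OF wf] Vcs_le_b4_top(2)[OF wf] by blast
  with kpaths_nonempty[OF wf CEx.prems] show ?case
    by (simp add: out_empty_coalition_cgs_of_kripke[OF wf CEx.prems] is_strats_def Max_b4_ex)
next
  case (CAll \<Phi>)
  have "\<forall>\<pi>\<in>kpaths K s. Vp (ratl_path_of_rctl_path \<Phi>) (cgs_of_kripke K) \<pi> = Vcp \<Phi> K \<pi>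
      \<and> Vcp \<Phi> K \<pi> \<le> b4_top"
    using CAll kpaths_in_KS[OF wf] Vcs_le_b4_top(2)[OF wf] by blast
  with kpaths_nonempty[OF wf CAll.prems] show ?case
    by (simp add: out_empty_coalition_cgs_of_kripke[OF wf CAll.prems] is_strats_def Max_b4_all)
qed simp_all

lemma Vs_Diam_eq_b4_top:
  assumes "is_strats S A F" and "\<And>\<pi>. \<pi> \<in> out S s A F \<Longrightarrow> Vp \<Phi> S \<pi> = b4_top"
  shows "Vs (Diam A \<Phi>) S s = b4_top"
proof -
  have "finite {b. b \<le> b4_top \<and> (\<exists>F. is_strats S A F \<and> (\<forall>\<pi>\<in>out S s A F. b \<le> Vp \<Phi> S \<pi>))}"
    by (rule finite_subset[of _ "{..b4_top}"]) auto
  then show ?thesis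
    using assms by (auto intro!: Max_eqI)
qed

lemma Vs_Diam_eq_b4_bot:
  assumes "is_strats S A F\<^sub>0"
    and "\<And>F. is_strats S A F \<Longrightarrow> \<exists>\<pi>\<in>out S s A F. Vp \<Phi> S \<pi> = b4_bot"
  shows "Vs (Diam A \<Phi>) S s = b4_bot"
proof -
  have "{b. b \<le> b4_top \<and> (\<exists>F. is_strats S A F \<and> (\<forall>\<pi>\<in>out S s A F. b \<le> Vp \<Phi> S \<pi>))} = {b4_bot}"
    using assms by (fastforce simp: b4_bot_def)
  then show ?thesis by simp
qed

lemma kripke_of_cgs_eqI:
  assumes "St S = St S'" and "lab S = lab S'" and "successor S = successor S'"
  shows "kripke_of_cgs S = kripke_of_cgs S'"
  using assms by (simp add: kripke_of_cgs_def)

definition choice_cgs :: "'ap cgs" where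
  "choice_cgs = \<lparr>St = {0, 1, 2}, Ag = {0}, Ac = {0, 1},
     delta = (\<lambda>s v. if s = 0 then (if v 0 = 0 then 1 else 2) else s),
     lab = (\<lambda>s. if s = 1 then UNIV else {})\<rparr>"

definition pennies_cgs :: "'ap cgs" where
  "pennies_cgs = \<lparr>St = {0, 1, 2}, Ag = {0, 1}, Ac = {0, 1},
     delta = (\<lambda>s v. if s = 0 then (if v 0 = v 1 then 1 else 2) else s),
     lab = (\<lambda>s. if s = 1 then UNIV else {})\<rparr>"

lemma cgs_wf_choice_cgs: "cgs_wf choice_cgs"
  by (auto simp: cgs_wf_def choice_cgs_def AV_def)

lemma cgs_wf_pennies_cgs: "cgs_wf pennies_cgs"
  by (auto simp: cgs_wf_def pennies_cgs_def AV_def)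

lemma successor_choice_cgs:
  "successor choice_cgs s s' \<longleftrightarrow> s' \<in> (if s = 0 then {1, 2} else {s})"
proof
  assume "successor choice_cgs s s'"
  then show "s' \<in> (if s = 0 then {1, 2} else {s})"
    by (auto simp: successor_def choice_cgs_def split: if_splits)
next
  define v where "v b = (\<lambda>_\<in>{0::nat}. b::nat)" for b
  have AV: "v 0 \<in> AV choice_cgs" "v 1 \<in> AV choice_cgs"
    by (simp_all add: v_def AV_def choice_cgs_def)
  have "delta choice_cgs s (v (if s' = 1 then 0 else 1)) = s'"
    if "s' \<in> (if s = 0 then {1, 2} else {s})"
    using that by (auto simp: v_def choice_cgs_def)
  moreover assume "s' \<in> (if s = 0 then {1, 2} else {s})"
  ultimately show "successor choice_cgs s s'"
    unfolding successor_def using AV by (metis (full_types))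
qed

lemma successor_pennies_cgs:
  "successor pennies_cgs s s' \<longleftrightarrow> s' \<in> (if s = 0 then {1, 2} else {s})"
proof
  assume "successor pennies_cgs s s'"
  then show "s' \<in> (if s = 0 then {1, 2} else {s})"
    by (auto simp: successor_def pennies_cgs_def split: if_splits)
next
  define v where "v b = (\<lambda>a\<in>{0::nat, 1}. if a = 0 then 0 else b::nat)" for b
  have AV: "v 0 \<in> AV pennies_cgs" "v 1 \<in> AV pennies_cgs"
    by (auto simp: v_def AV_def pennies_cgs_def)
  have "delta pennies_cgs s (v (if s' = 1 then 0 else 1)) = s'"
    if "s' \<in> (if s = 0 then {1, 2} else {s})"
    using that by (auto simp: v_def pennies_cgs_def)
  moreover assume "s' \<in> (if s = 0 then {1, 2} else {s})"
  ultimately show "successor pennies_cgs s s'"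
    unfolding successor_def using AV by (metis (full_types))
qed

lemma Vs_choice_cgs: "Vs (Diam {0} (Next (Prop p))) choice_cgs 0 = b4_top"
proof (rule Vs_Diam_eq_b4_top)
  show "is_strats choice_cgs {0} (\<lambda>_ _. 0)"
    by (simp add: is_strats_def choice_cgs_def)
next
  fix \<pi> assume "\<pi> \<in> out choice_cgs 0 {0} (\<lambda>_ _. 0)"
  then obtain v where "\<pi> 0 = 0" "v 0 = 0" "\<pi> 1 = delta choice_cgs (\<pi> 0) v"
    unfolding out_def by (auto simp: choice_cgs_def dest: spec[of _ 0])
  then have "\<pi> 1 = 1" by (simp add: choice_cgs_def)
  then show "Vp (Next (Prop p)) choice_cgs \<pi> = b4_top"
    by (simp add: choice_cgs_def)
qed

lemma Vs_pennies_cgs: "Vs (Diam {0} (Next (Prop p))) pennies_cgs 0 = b4_bot"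
proof (rule Vs_Diam_eq_b4_bot)
  show "is_strats pennies_cgs {0} (\<lambda>_ _. 0)"
    by (simp add: is_strats_def pennies_cgs_def)
next
  fix F assume F: "is_strats pennies_cgs {0} F"
  define \<pi> :: "nat \<Rightarrow> nat" where "\<pi> n = (if n = 0 then 0 else 2)" for n
  have "\<pi> \<in> out pennies_cgs 0 {0} F"
    unfolding out_def
  proof (intro CollectI conjI allI)
    fix n
    define a where "a = F 0 (hist \<pi> n)"
    have a: "a \<in> {0, 1}"
      using F by (simp add: is_strats_def pennies_cgs_def a_def)
    text \<open>Agent 1 plays the action agent 0 does not play.\<close>
    define v where "v = (\<lambda>x\<in>{0::nat, 1}. if x = 0 then a else 1 - a)"
    have "v \<in> AV pennies_cgs" "\<pi> (Suc n) = delta pennies_cgs (\<pi> n) v"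
      using a by (auto simp: v_def AV_def pennies_cgs_def \<pi>_def)
    moreover have "\<forall>x\<in>{0} \<inter> Ag pennies_cgs. v x = F x (hist \<pi> n)"
      by (simp add: v_def a_def pennies_cgs_def)
    ultimately show "\<exists>v\<in>AV pennies_cgs. (\<forall>x\<in>{0} \<inter> Ag pennies_cgs. v x = F x (hist \<pi> n))
        \<and> \<pi> (Suc n) = delta pennies_cgs (\<pi> n) v"
      by blast
  qed (simp add: \<pi>_def)
  moreover have "Vp (Next (Prop p)) pennies_cgs \<pi> = b4_bot"
    by (simp add: \<pi>_def pennies_cgs_def b4_bot_def)
  ultimately show "\<exists>\<pi>\<in>out pennies_cgs 0 {0} F. Vp (Next (Prop p)) pennies_cgs \<pi> = b4_bot"
    by blast
qed

lemma kripke_of_choice_cgs_eq_pennies_cgs: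
  "kripke_of_cgs choice_cgs = kripke_of_cgs pennies_cgs"
proof (rule kripke_of_cgs_eqI)
  show "successor choice_cgs = successor pennies_cgs"
    by (intro ext) (simp only: successor_choice_cgs successor_pennies_cgs)
qed (simp_all add: choice_cgs_def pennies_cgs_def)

theorem theorem4:
  fixes dummy :: "'ap::finite"
  shows "(\<forall>\<phi> :: 'ap rctl. \<exists>\<phi>' :: 'ap ratl. \<forall>K :: 'ap kripke. kripke_wf K \<longrightarrow>
            (\<forall>s\<in>KS K. Vs \<phi>' (cgs_of_kripke K) s = Vcs \<phi> K s))
       \<and> (\<exists>\<psi> :: 'ap ratl. \<forall>\<chi> :: 'ap rctl.
            \<not> (\<forall>S :: 'ap cgs. cgs_wf S \<longrightarrow>
                 (\<forall>s\<in>St S. Vs \<psi> S s = Vcs \<chi> (kripke_of_cgs S) s)))"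
proof (rule conjI)
  show "\<forall>\<phi> :: 'ap rctl. \<exists>\<phi>'. \<forall>K. kripke_wf K \<longrightarrow>
          (\<forall>s\<in>KS K. Vs \<phi>' (cgs_of_kripke K) s = Vcs \<phi> K s)"
    using Vs_ratl_of_rctl(1) by blast
next
  let ?\<psi> = "Diam {0} (Next (Prop undefined)) :: 'ap ratl"
  show "\<exists>\<psi>. \<forall>\<chi> :: 'ap rctl. \<not> (\<forall>S. cgs_wf S \<longrightarrow>
          (\<forall>s\<in>St S. Vs \<psi> S s = Vcs \<chi> (kripke_of_cgs S) s))"
  proof (intro exI[of _ ?\<psi>] allI notI)
    fix \<chi> :: "'ap rctl"
    assume agree: "\<forall>S. cgs_wf S \<longrightarrow> (\<forall>s\<in>St S. Vs ?\<psi> S s = Vcs \<chi> (kripke_of_cgs S) s)"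
    have initial: "0 \<in> St choice_cgs" "0 \<in> St pennies_cgs"
      by (simp_all add: choice_cgs_def pennies_cgs_def)
    have "b4_top = Vcs \<chi> (kripke_of_cgs choice_cgs) 0"
      using agree cgs_wf_choice_cgs initial(1) Vs_choice_cgs by metis
    also have "\<dots> = Vcs \<chi> (kripke_of_cgs pennies_cgs) 0"
      by (simp only: kripke_of_choice_cgs_eq_pennies_cgs)
    also have "\<dots> = b4_bot"
      using agree cgs_wf_pennies_cgs initial(2) Vs_pennies_cgs by metis
    finally show False by (simp add: b4_top_def b4_bot_def)
  qed
qed

end
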